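(* Let $A=(a_{ij})\in M_n(\mathbb{C})$ and suppose the Schur map $S_A\colon M_n(\mathbb{C})\to M_n(\mathbb{C})$, $S_A(B)=A\circ B$, is nonzero and multiplicative (i.e. $S_A(BC)=S_A(B)S_A(C)$ for all $B,C$). Then: (i) all entries of $A$ are nonzero, $A^{*}=\overline{A^{[-1]}}$, and $A$ is diagonalizable; (ii) $\|A\|\ge n$, and if $A^{*}=A$ then $\|A\|=n$; (iii) if $A=A^{*}$, then $S_A$ is numerical range preserving, i.e. $W(S_A(B))=W(B)$ for all $B\in M_n(\mathbb{C})$.
   Context: $A\circ B=(a_{ij}b_{ij})$ is the entrywise product. For a matrix $A$ with no zero entries, $A^{[-1]}=(1/a_{ij})$ is its entrywise reciprocal, and $\overline{X}$ denotes the entrywise complex conjugate; $A^*$ is the conjugate transpose. $\|A\|$ is the operator (spectral) norm of $A$ acting on $\mathbb{C}^n$. The numerical range of $B$ is $W(B)=\{\langle Bx,x\rangle : x\in\mathbb{C}^n,\ \|x\|=1\}$. *)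

theory Defs
  imports "HOL-Analysis.Analysis"
begin

text \<open>Complex n x n matrices are modelled as complex ^'n ^'n, with n = CARD('n).\<close>

definition schur_prod :: "complex^'n^'m \<Rightarrow> complex^'n^'m \<Rightarrow> complex^'n^'m" where
  "schur_prod A B = (\<chi> i j. A$i$j * B$i$j)"

definition entry_recip :: "complex^'n^'m \<Rightarrow> complex^'n^'m" where
  "entry_recip A = (\<chi> i j. 1 / A$i$j)"

definition entry_cnj :: "complex^'n^'m \<Rightarrow> complex^'n^'m" where
  "entry_cnj A = (\<chi> i j. cnj (A$i$j))"

definition conj_transpose :: "complex^'n^'m \<Rightarrow> complex^'m^'n" where
  "conj_transpose A = (\<chi> i j. cnj (A$j$i))"

definition cinner :: "complex^'n \<Rightarrow> complex^'n \<Rightarrow> complex" where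
  "cinner x y = (\<Sum>i\<in>UNIV. x$i * cnj (y$i))"

definition numerical_range :: "complex^'n^'n \<Rightarrow> complex set" where
  "numerical_range B = {cinner (B *v x) x | x. norm x = 1}"

definition op_norm :: "complex^'n^'m \<Rightarrow> real" where
  "op_norm A = onorm (\<lambda>x. A *v x)"

definition diagonalizable :: "complex^'n^'n \<Rightarrow> bool" where
  "diagonalizable A \<longleftrightarrow> (\<exists>(P::complex^'n^'n) (D::complex^'n^'n). invertible P \<and> (\<forall>i j. i \<noteq> j \<longrightarrow> D$i$j = 0)
      \<and> A = P ** D ** matrix_inv P)"

end

theory Submission
  imports Defs
begin

(* Testing multiplicativity on matrix units, E_ik E_kj = E_ij, gives a_ij = a_ik a_kj.  As S_A is
   nonzero this forces a_kk = 1 and a_ij a_ji = 1, so a_ij = u_i / u_j for the k-th column u of A,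
   i.e. A = D J D^-1 with D = diag u and J the all-ones matrix.  A is the rank-one matrix u w^T with w_j = 1/u_j, so ||A|| = ||u|| ||w||, which is at least
   sum_j |u_j| |w_j| = n by Cauchy-Schwarz.  If A is Hermitian then |u_i| = 1, so ||A|| = n and
   A o B = D B D^* is a unitary similarity, which preserves the numerical range. *)

definition matrix_unit :: "'m \<Rightarrow> 'n \<Rightarrow> 'a::semiring_1^'n^'m" where
  "matrix_unit p q = (\<chi> i j. if i = p \<and> j = q then 1 else 0)"

definition outer_prod :: "'a::times^'m \<Rightarrow> 'a^'n \<Rightarrow> 'a^'n^'m" where
  "outer_prod u w = (\<chi> i j. u$i * w$j)"

definition ratio_matrix :: "complex^'n \<Rightarrow> complex^'n^'n" where
  "ratio_matrix u = (\<chi> i j. u$i / u$j)"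

lemma matrix_unit_mult:
  "matrix_unit i k ** matrix_unit k j = (matrix_unit i j :: 'a::semiring_1^'n^'m)"
  unfolding matrix_unit_def matrix_matrix_mult_def vec_eq_iff
  by (auto simp: if_distrib[where f="\<lambda>x. x * _"] sum.delta cong: if_cong)

lemma schur_multiplicative_entry:
  assumes mult: "\<forall>B C. schur_prod A (B ** C) = schur_prod A B ** schur_prod A C"
  shows "A$i$j = A$i$k * A$k$j"
proof -
  have "schur_prod A (matrix_unit i k ** matrix_unit k j) $ i $ j
      = (schur_prod A (matrix_unit i k) ** schur_prod A (matrix_unit k j)) $ i $ j"
    using mult by simp
  then show ?thesis
    by (simp add: matrix_unit_mult schur_prod_def matrix_unit_def matrix_matrix_mult_def
        if_distrib[where f="\<lambda>x. x * _"] if_distrib[where f="\<lambda>x. _ * x"] cong: if_cong)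
qed

lemma schur_multiplicative_diag:
  assumes nonzero: "(\<lambda>B. schur_prod A B) \<noteq> (\<lambda>B. 0)"
    and mult: "\<forall>B C. schur_prod A (B ** C) = schur_prod A B ** schur_prod A C"
  shows "A$k$k = 1"
proof -
  obtain B where "schur_prod A B \<noteq> 0" using nonzero by auto
  then obtain p q where "A$p$q \<noteq> 0" by (auto simp: schur_prod_def vec_eq_iff)
  moreover have "A$p$q = A$p$p * A$p$q" using schur_multiplicative_entry[OF mult] .
  ultimately have "A$p$p = 1" by simp
  then have "A$p$k * A$k$p = 1" using schur_multiplicative_entry[OF mult, of p p k] by simp
  then have "A$k$p \<noteq> 0" by auto
  moreover have "A$k$p = A$k$k * A$k$p" using schur_multiplicative_entry[OF mult] .
  ultimately show ?thesis by simp
qed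

lemma schur_multiplicative_entry_inverse:
  assumes "(\<lambda>B. schur_prod A B) \<noteq> (\<lambda>B. 0)"
    and mult: "\<forall>B C. schur_prod A (B ** C) = schur_prod A B ** schur_prod A C"
  shows "A$i$j * A$j$i = 1"
  using schur_multiplicative_entry[OF mult, of i i j] schur_multiplicative_diag[OF assms] by simp

lemma schur_multiplicative_entry_nonzero:
  assumes "(\<lambda>B. schur_prod A B) \<noteq> (\<lambda>B. 0)"
    and "\<forall>B C. schur_prod A (B ** C) = schur_prod A B ** schur_prod A C"
  shows "A$i$j \<noteq> 0"
  using schur_multiplicative_entry_inverse[OF assms, of i j] by auto

lemma schur_multiplicative_eq_ratio_matrix:
  assumes "(\<lambda>B. schur_prod A B) \<noteq> (\<lambda>B. 0)"
    and mult: "\<forall>B C. schur_prod A (B ** C) = schur_prod A B ** schur_prod A C"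
  shows "A = ratio_matrix (column k A)"
proof -
  have entry: "A$i$j = A$i$k / A$j$k" for i j
  proof -
    have "A$j$k * A$k$j = 1" by (rule schur_multiplicative_entry_inverse[OF assms])
    moreover have "A$j$k \<noteq> 0" by (rule schur_multiplicative_entry_nonzero[OF assms])
    ultimately have "A$k$j = 1 / A$j$k" by (simp add: eq_divide_eq mult.commute)
    then show ?thesis using schur_multiplicative_entry[OF mult, of i j k] by simp
  qed
  show ?thesis by (auto simp: ratio_matrix_def column_def vec_eq_iff intro: entry)
qed

(* No hypothesis on u is needed: with x / 0 = 0 a zero entry u_i makes both sides vanish alike. *)
lemma conj_transpose_ratio_matrix:
  "conj_transpose (ratio_matrix u) = entry_cnj (entry_recip (ratio_matrix u))"
  by (simp add: conj_transpose_def entry_cnj_def entry_recip_def ratio_matrix_def vec_eq_iff)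

lemma hermitian_ratio_matrix_unimodular:
  assumes "conj_transpose (ratio_matrix u) = ratio_matrix u" and "u$k = 1" and "u$i \<noteq> 0"
  shows "cmod (u$i) = 1"
proof -
  have "conj_transpose (ratio_matrix u) $i$k = ratio_matrix u $i$k" using assms(1) by simp
  then have "cnj (1 / u$i) = u$i" using assms(2) by (simp add: conj_transpose_def ratio_matrix_def)
  then have "1 = cnj (u$i) * u$i" using assms(3) by (simp add: field_simps)
  then have "(cmod (u$i))\<^sup>2 = 1" by (metis complex_norm_square mult.commute of_real_eq_1_iff)
  then show ?thesis using norm_ge_zero[of "u$i"] by (smt (verit) power2_eq_1_iff)
qed

lemma ratio_matrix_eq_outer_prod: "ratio_matrix u = outer_prod u (\<chi> j. 1 / u$j)"
  by (simp add: ratio_matrix_def outer_prod_def vec_eq_iff)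

lemma ratio_matrix_unimodular:
  assumes "\<forall>i. cmod (u$i) = 1"
  shows "ratio_matrix u = outer_prod u (\<chi> j. cnj (u$j))"
proof -
  have "1 / u$j = cnj (u$j)" for j
    using assms complex_div_cnj[of 1 "u$j"] by simp
  then show ?thesis by (simp add: ratio_matrix_eq_outer_prod)
qed

lemma diagonalizable_if_left_inverse:
  fixes P Q D :: "complex^'n^'n"
  assumes QP: "Q ** P = mat 1" and diagonal: "\<forall>i j. i \<noteq> j \<longrightarrow> D$i$j = 0"
  shows "diagonalizable (P ** D ** Q)"
proof -
  have PQ: "P ** Q = mat 1" using QP matrix_left_right_inverse by blast
  have "P ** matrix_inv P = mat 1 \<and> matrix_inv P ** P = mat 1"
    unfolding matrix_inv_def by (rule someI[of _ Q]) (use PQ QP in blast)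
  then have "matrix_inv P = Q ** P ** matrix_inv P" using QP by simp
  also have "\<dots> = Q"
    using PQ \<open>P ** matrix_inv P = mat 1 \<and> _\<close> by (simp add: matrix_mul_assoc[symmetric])
  finally have "matrix_inv P = Q" .
  moreover have "invertible P" using PQ QP invertible_def by blast
  ultimately show ?thesis unfolding diagonalizable_def using diagonal by metis
qed

lemma diagonalizable_ratio_matrix:
  fixes u :: "complex^'n"
  assumes nonzero: "\<forall>i. u$i \<noteq> 0"
  shows "diagonalizable (ratio_matrix u)"
proof -
  (* Eigenbasis of the rank-one matrix: the columns of P are u (eigenvalue n) and u_j e_j - u_k e_k
     for j \<noteq> k (eigenvalue 0); Q is the inverse of P. *)
  fix k :: 'n
  define n :: complex where "n = of_nat CARD('n)"
  have "n \<noteq> 0" by (simp add: n_def)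
  define p :: "'n \<Rightarrow> 'n \<Rightarrow> complex" where
    "p l j = (if j = k then 1 else of_bool (l = j) - of_bool (l = k))" for l j
  define q :: "'n \<Rightarrow> 'n \<Rightarrow> complex" where
    "q i l = (if i = k then 1 / n else of_bool (i = l) - 1 / n)" for i l
  define P :: "complex^'n^'n" where "P = (\<chi> i j. u$i * p i j)"
  define Q :: "complex^'n^'n" where "Q = (\<chi> i j. q i j / u$j)"
  define D :: "complex^'n^'n" where "D = (\<chi> i j. if i = k \<and> j = k then n else 0)"
  have "(\<Sum>l\<in>UNIV. q i l * p l j) = of_bool (i = j)" for i j
  proof (cases "j = k")
    case True
    then show ?thesis using \<open>n \<noteq> 0\<close> by (simp add: p_def q_def sum_subtractf n_def)
  next
    case False
    then have "(\<Sum>l\<in>UNIV. q i l * p l j)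
        = (\<Sum>l\<in>UNIV. (if l = j then q i l else 0) - (if l = k then q i l else 0))"
      by (intro sum.cong) (auto simp: p_def)
    also have "\<dots> = q i j - q i k" by (simp add: sum_subtractf)
    also have "\<dots> = of_bool (i = j)" using False by (auto simp: q_def)
    finally show ?thesis .
  qed
  moreover have "(Q ** P)$i$j = (\<Sum>l\<in>UNIV. q i l * p l j)" for i j
    using nonzero by (simp add: matrix_matrix_mult_def P_def Q_def)
  ultimately have "Q ** P = mat 1" by (simp add: vec_eq_iff mat_def)
  moreover have "P ** D ** Q = ratio_matrix u"
  proof -
    have "(P ** D)$i$l = (if l = k then u$i * n else 0)" for i l
      by (simp add: matrix_matrix_mult_def P_def D_def p_def if_distrib[where f="\<lambda>x. _ * x"]
          cong: if_cong)
    then have "(P ** D ** Q)$i$j = u$i * n * Q$k$j" for i j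
      by (simp add: matrix_matrix_mult_def[of "P ** D"] if_distrib[where f="\<lambda>x. x * _"] cong: if_cong)
    then show ?thesis using \<open>n \<noteq> 0\<close> by (simp add: vec_eq_iff Q_def q_def ratio_matrix_def)
  qed
  moreover have "\<forall>i j. i \<noteq> j \<longrightarrow> D$i$j = 0" by (simp add: D_def)
  ultimately show ?thesis using diagonalizable_if_left_inverse by metis
qed

lemma norm_vector_smult:
  fixes x :: "'a::real_normed_div_algebra^'n"
  shows "norm (c *s x) = norm c * norm x"
  unfolding norm_vec_def using L2_set_right_distrib[of "norm c" "\<lambda>i. norm (x$i)" UNIV]
  by (simp add: norm_mult mult.commute)

lemma power2_norm_vec: "(norm x)\<^sup>2 = (\<Sum>j\<in>UNIV. (norm (x$j))\<^sup>2)"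
  unfolding norm_vec_def L2_set_def by (simp add: sum_nonneg)

lemma norm_vec_unimodular:
  fixes u :: "complex^'n"
  assumes "\<forall>i. cmod (u$i) = 1"
  shows "norm u = sqrt (real CARD('n))"
  using assms
  by (simp add: norm_vec_def L2_set_constant)

lemma norm_sum_mult_le:
  fixes w x :: "complex^'n"
  shows "cmod (\<Sum>j\<in>UNIV. w$j * x$j) \<le> norm w * norm x"
proof -
  have "cmod (\<Sum>j\<in>UNIV. w$j * x$j) \<le> (\<Sum>j\<in>UNIV. \<bar>cmod (w$j)\<bar> * \<bar>cmod (x$j)\<bar>)"
    using norm_sum[of "\<lambda>j. w$j * x$j" UNIV] by (simp add: norm_mult)
  also have "\<dots> \<le> norm w * norm x"
    unfolding norm_vec_def by (rule L2_set_mult_ineq)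
  finally show ?thesis .
qed

lemma outer_prod_mult_vector: "outer_prod u w *v x = (\<Sum>j\<in>UNIV. w$j * x$j) *s u"
  for u w x :: "'a::comm_semiring_1^'n"
  by (simp add: outer_prod_def matrix_vector_mult_def vec_eq_iff sum_distrib_left mult_ac)

lemma op_norm_outer_prod:
  fixes u w :: "complex^'n"
  shows "op_norm (outer_prod u w) = norm u * norm w"
proof (rule antisym)
  show "op_norm (outer_prod u w) \<le> norm u * norm w"
    unfolding op_norm_def
  proof (rule onorm_bound)
    fix x
    have "norm (outer_prod u w *v x) = norm u * cmod (\<Sum>j\<in>UNIV. w$j * x$j)"
      by (simp add: outer_prod_mult_vector norm_vector_smult mult.commute)
    also have "\<dots> \<le> norm u * (norm w * norm x)"
      by (rule mult_left_mono[OF norm_sum_mult_le]) simp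
    finally show "norm (outer_prod u w *v x) \<le> norm u * norm w * norm x"
      by (simp add: mult.assoc)
  qed simp
next
  define x where "x = (\<chi> j. cnj (w$j))"
  have "(\<Sum>j\<in>UNIV. w$j * x$j) = (\<Sum>j\<in>UNIV. of_real ((cmod (w$j))\<^sup>2))"
    by (simp add: x_def complex_norm_square del: of_real_power)
  also have "\<dots> = of_real ((norm w)\<^sup>2)"
    by (simp add: power2_norm_vec del: of_real_power)
  finally have "norm (outer_prod u w *v x) = norm u * (norm w)\<^sup>2"
    by (simp add: outer_prod_mult_vector norm_vector_smult norm_power mult.commute)
  moreover have "norm (outer_prod u w *v x) \<le> op_norm (outer_prod u w) * norm x"
    unfolding op_norm_def by (rule onorm) simp
  moreover have "norm x = norm w" by (simp add: x_def norm_vec_def)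
  ultimately have "norm u * (norm w)\<^sup>2 \<le> op_norm (outer_prod u w) * norm w" by simp
  show "norm u * norm w \<le> op_norm (outer_prod u w)"
  proof (cases "w = 0")
    case True
    then show ?thesis using onorm_pos_le[of "\<lambda>x. outer_prod u w *v x"] by (simp add: op_norm_def)
  next
    case False
    then show ?thesis using \<open>norm u * (norm w)\<^sup>2 \<le> _\<close> by (simp add: power2_eq_square)
  qed
qed

lemma op_norm_ratio_matrix_ge:
  assumes "\<forall>i. u$i \<noteq> 0"
  shows "real CARD('n) \<le> op_norm (ratio_matrix (u :: complex^'n))"
proof -
  have "real CARD('n) = (\<Sum>j\<in>UNIV. \<bar>cmod (u$j)\<bar> * \<bar>cmod ((\<chi> j. 1 / u$j :: complex^'n)$j)\<bar>)"
    using assms by (simp add: norm_divide)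
  also have "\<dots> \<le> norm u * norm (\<chi> j. 1 / u$j :: complex^'n)"
    unfolding norm_vec_def by (rule L2_set_mult_ineq)
  also have "\<dots> = op_norm (ratio_matrix u)"
    by (simp add: ratio_matrix_eq_outer_prod op_norm_outer_prod)
  finally show ?thesis .
qed

lemma op_norm_ratio_matrix_unimodular:
  assumes "\<forall>i. cmod (u$i) = 1"
  shows "op_norm (ratio_matrix (u :: complex^'n)) = real CARD('n)"
proof -
  have "\<forall>j. cmod ((\<chi> j. 1 / u$j :: complex^'n)$j) = 1" using assms by (simp add: norm_divide)
  then show ?thesis
    using assms by (simp add: ratio_matrix_eq_outer_prod op_norm_outer_prod norm_vec_unimodular)
qed

lemma cinner_schur_outer_prod_cnj:
  "cinner (schur_prod (outer_prod u (\<chi> j. cnj (u$j))) B *v x) x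
    = cinner (B *v (\<chi> j. cnj (u$j) * x$j)) (\<chi> j. cnj (u$j) * x$j)"
  unfolding cinner_def matrix_vector_mult_def schur_prod_def outer_prod_def
  by (simp add: sum_distrib_left sum_distrib_right mult_ac)

lemma numerical_range_schur_unimodular:
  fixes u :: "complex^'n"
  assumes "\<forall>i. cmod (u$i) = 1"
  shows "numerical_range (schur_prod (outer_prod u (\<chi> j. cnj (u$j))) B) = numerical_range B"
proof -
  define T :: "complex^'n \<Rightarrow> complex^'n" where "T x = (\<chi> j. cnj (u$j) * x$j)" for x
  have norm_T: "norm (T x) = norm x" for x
    using assms by (simp add: T_def norm_vec_def norm_mult)
  have "cnj (u$j) * u$j = 1" for j
    using assms complex_norm_square[of "u$j"] by (simp add: mult.commute)
  then have T_inverse: "T (\<chi> j. u$j * y$j) = y" for y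
    by (simp add: T_def vec_eq_iff mult.assoc[symmetric])
  have sphere: "T ` {x. norm x = 1} = {y. norm y = 1}"
  proof (intro set_eqI iffI)
    fix y assume "y \<in> T ` {x. norm x = 1}"
    then show "y \<in> {y. norm y = 1}" using norm_T by auto
  next
    fix y :: "complex^'n" assume "y \<in> {y. norm y = 1}"
    moreover have "norm (\<chi> j. u$j * y$j) = norm y"
      using norm_T[of "\<chi> j. u$j * y$j"] by (simp only: T_inverse)
    ultimately show "y \<in> T ` {x. norm x = 1}"
      by (intro image_eqI[where x="\<chi> j. u$j * y$j"]) (simp_all add: T_inverse)
  qed
  have "numerical_range B = (\<lambda>y. cinner (B *v y) y) ` T ` {x. norm x = 1}"
    unfolding numerical_range_def setcompr_eq_image sphere ..
  also have "\<dots> = numerical_range (schur_prod (outer_prod u (\<chi> j. cnj (u$j))) B)"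
    unfolding numerical_range_def setcompr_eq_image cinner_schur_outer_prod_cnj image_image T_def ..
  finally show ?thesis ..
qed

theorem corollary2p3:
  fixes A :: "complex^'n^'n"
  assumes nonzero: "(\<lambda>B. schur_prod A B) \<noteq> (\<lambda>B. 0)"
    and mult: "\<forall>B C. schur_prod A (B ** C) = schur_prod A B ** schur_prod A C"
  shows "((\<forall>i j. A$i$j \<noteq> 0) \<and> conj_transpose A = entry_cnj (entry_recip A) \<and> diagonalizable A)
    \<and> (op_norm A \<ge> real CARD('n) \<and> (conj_transpose A = A \<longrightarrow> op_norm A = real CARD('n)))
    \<and> (conj_transpose A = A \<longrightarrow> (\<forall>B. numerical_range (schur_prod A B) = numerical_range B))"
proof -
  fix k :: 'n
  define u where "u = column k A"
  have A_eq: "A = ratio_matrix u"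
    unfolding u_def by (rule schur_multiplicative_eq_ratio_matrix[OF nonzero mult])
  have u_nonzero: "\<forall>i. u$i \<noteq> 0"
    by (simp add: u_def column_def schur_multiplicative_entry_nonzero[OF nonzero mult])
  have "u$k = 1" using schur_multiplicative_diag[OF nonzero mult] by (simp add: u_def column_def)
  then have unimodular: "\<forall>i. cmod (u$i) = 1" if "conj_transpose A = A"
    using hermitian_ratio_matrix_unimodular that u_nonzero A_eq by metis
  have "\<forall>i j. A$i$j \<noteq> 0" by (simp add: schur_multiplicative_entry_nonzero[OF nonzero mult])
  moreover have "conj_transpose A = entry_cnj (entry_recip A)"
    unfolding A_eq by (rule conj_transpose_ratio_matrix)
  moreover have "diagonalizable A"
    unfolding A_eq using u_nonzero by (rule diagonalizable_ratio_matrix)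
  moreover have "op_norm A \<ge> real CARD('n)"
    unfolding A_eq using u_nonzero by (rule op_norm_ratio_matrix_ge)
  moreover have "op_norm A = real CARD('n)" if "conj_transpose A = A"
    unfolding A_eq using unimodular[OF that] by (rule op_norm_ratio_matrix_unimodular)
  moreover have "numerical_range (schur_prod A B) = numerical_range B" if "conj_transpose A = A" for B
    using unimodular[OF that]
    by (simp add: A_eq ratio_matrix_unimodular numerical_range_schur_unimodular)
  ultimately show ?thesis by blast
qed

end
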